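(* Let $m,n\ge1$, $N=2^m$, $D=2^{m+2}$, and fix $\mathbf x=(x_1,\dots,x_n)\in\{0,\dots,N-1\}^n$. Let $\mathbf y=(y_1,\dots,y_n)$, $v$ and $v_1,\dots,v_{n-1}$ be independent and uniformly distributed on $\{0,\dots,N-1\}$ (each coordinate), and put $v_n=\big(4v-4\sum_{i=1}^{n-1}v_i \bmod D\big)/4\in\{0,\dots,N-1\}$ (i.e. $v_n\equiv v-\sum_{i<n}v_i\pmod N$). For $i=1,\dots,n$ let $p_i=2x_i+1$, $q_i=2y_i+1$, $s_i=4v_i-2y_i-1\bmod D$ and $M_i=s_i+p_iq_i\bmod D$. Let $M=(M_1,\dots,M_n)$, $X_B=(\mathbf y,v)$ and $u=\sum_{i=1}^n x_iy_i+v\bmod N$. Then the conditional mutual information satisfies $H(M:X_B\mid u)=0$.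
   Context: $H(\cdot:\cdot\mid\cdot)$ is the Shannon conditional mutual information. This models a semi-honest Alice (with input $\mathbf x$) who learns all values $M_i$ in the scalar-product protocol, and $X_B$ is Bob's private input; the conclusion says she learns nothing about $X_B$ beyond the intended output $u$. *)

theory Defs
  imports "HOL-Probability.Probability"
begin

text \<open>Sample space of Bob's randomness: \<open>(y, v, w)\<close> with \<open>y = (y_1..y_n)\<close>, \<open>v\<close>,
  and \<open>w = (v_1..v_{n-1})\<close>, all coordinates in \<open>{0..N-1}\<close>, \<open>N = 2^m\<close>.\<close>
definition sp_space :: "nat \<Rightarrow> nat \<Rightarrow> ((nat \<Rightarrow> int) \<times> int \<times> (nat \<Rightarrow> int)) set" where
  "sp_space m n = ({1..n} \<rightarrow>\<^sub>E {0..<2^m}) \<times> {0..<2^m} \<times> ({1..<n} \<rightarrow>\<^sub>E {0..<2^m})"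

definition sp_share :: "nat \<Rightarrow> nat \<Rightarrow> (nat \<Rightarrow> int) \<times> int \<times> (nat \<Rightarrow> int) \<Rightarrow> nat \<Rightarrow> int" where
  "sp_share m n \<omega> i = (case \<omega> of (y, v, w) \<Rightarrow>
     if i < n then w i else ((4 * v - 4 * (\<Sum>j\<in>{1..<n}. w j)) mod 2^(m+2)) div 4)"

definition sp_msgs :: "nat \<Rightarrow> nat \<Rightarrow> (nat \<Rightarrow> int) \<Rightarrow> (nat \<Rightarrow> int) \<times> int \<times> (nat \<Rightarrow> int) \<Rightarrow> (nat \<Rightarrow> int)" where
  "sp_msgs m n x \<omega> = (case \<omega> of (y, v, w) \<Rightarrow>
     (\<lambda>i\<in>{1..n}. ((4 * sp_share m n \<omega> i - 2 * y i - 1) mod 2^(m+2)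
                    + (2 * x i + 1) * (2 * y i + 1)) mod 2^(m+2)))"

definition sp_bob :: "(nat \<Rightarrow> int) \<times> int \<times> (nat \<Rightarrow> int) \<Rightarrow> (nat \<Rightarrow> int) \<times> int" where
  "sp_bob \<omega> = (case \<omega> of (y, v, w) \<Rightarrow> (y, v))"

definition sp_out :: "nat \<Rightarrow> nat \<Rightarrow> (nat \<Rightarrow> int) \<Rightarrow> (nat \<Rightarrow> int) \<times> int \<times> (nat \<Rightarrow> int) \<Rightarrow> int" where
  "sp_out m n x \<omega> = (case \<omega> of (y, v, w) \<Rightarrow> ((\<Sum>i=1..n. x i * y i) + v) mod 2^m)"

end

theory Submission
  imports Defs
begin

text \<open>Since \<open>M\<^sub>i \<equiv> 4 ((v\<^sub>i + x\<^sub>i y\<^sub>i) mod N) + 2 x\<^sub>i (mod D)\<close>, Alice only sees the masked shares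
  \<open>t\<^sub>i = (v\<^sub>i + x\<^sub>i y\<^sub>i) mod N\<close>. For fixed Bob input \<open>(y, v)\<close>, the first \<open>n - 1\<close> of them are the
  uniform random shares translated by \<open>x\<^sub>i y\<^sub>i\<close> modulo \<open>N\<close>, a bijection, and the last one is
  forced by \<open>\<Sum> t\<^sub>i \<equiv> u (mod N)\<close>. Hence, given \<open>X\<^sub>B\<close>, the messages are distributed exactly as for
  Bob input \<open>(0, u)\<close>: their conditional law depends on \<open>X\<^sub>B\<close> only through \<open>u\<close>, which is itself a
  function of \<open>X\<^sub>B\<close>. This is conditional independence of \<open>M\<close> and \<open>X\<^sub>B\<close> given \<open>u\<close>.\<close>

lemma (in information_space) conditional_mutual_information_eq_0:
  assumes sf: "simple_function M X" "simple_function M Y" "simple_function M Z"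
    and indep: "\<And>\<omega>. \<omega> \<in> space M \<Longrightarrow>
      prob {\<omega>'\<in>space M. X \<omega>' = X \<omega> \<and> Y \<omega>' = Y \<omega> \<and> Z \<omega>' = Z \<omega>} * prob {\<omega>'\<in>space M. Z \<omega>' = Z \<omega>}
      = prob {\<omega>'\<in>space M. X \<omega>' = X \<omega> \<and> Z \<omega>' = Z \<omega>} * prob {\<omega>'\<in>space M. Y \<omega>' = Y \<omega> \<and> Z \<omega>' = Z \<omega>}"
  shows "conditional_mutual_information b
    (count_space (X ` space M)) (count_space (Y ` space M)) (count_space (Z ` space M)) X Y Z = 0"
    (is "?I = 0")
proof -
  let ?P = "\<lambda>f z. prob (f -` {z} \<inter> space M)"
  have sd: "simple_distributed M f (?P f)" if "simple_function M f" for f :: "'a \<Rightarrow> 'e"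
    using that by (rule simple_distributedI) auto
  have fiber: "?P f (f \<omega>) = prob {\<omega>'\<in>space M. f \<omega>' = f \<omega>}" for f :: "'a \<Rightarrow> 'e" and \<omega>
    by (rule arg_cong[where f=prob]) auto
  have event: "{\<omega>'\<in>space M. f \<omega>' = z} \<in> events" if "simple_function M f" for f :: "'a \<Rightarrow> 'e" and z
  proof -
    have "{\<omega>'\<in>space M. f \<omega>' = z} = f -` {z} \<inter> space M" by auto
    then show ?thesis using simple_functionD(2)[OF that] by simp
  qed
  have "?I = (\<Sum>(x, y, z)\<in>(\<lambda>\<omega>. (X \<omega>, Y \<omega>, Z \<omega>)) ` space M.
      ?P (\<lambda>\<omega>. (X \<omega>, Y \<omega>, Z \<omega>)) (x, y, z) * log b (?P (\<lambda>\<omega>. (X \<omega>, Y \<omega>, Z \<omega>)) (x, y, z) /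
        (?P (\<lambda>\<omega>. (X \<omega>, Z \<omega>)) (x, z) * (?P (\<lambda>\<omega>. (Y \<omega>, Z \<omega>)) (y, z) / ?P Z z))))"
    using sf by (intro conditional_mutual_information_eq sd simple_function_Pair)
  also have "\<dots> = 0"
  proof (rule sum.neutral, safe)
    fix \<omega> assume \<omega>: "\<omega> \<in> space M"
    let ?p = "?P (\<lambda>\<omega>. (X \<omega>, Y \<omega>, Z \<omega>)) (X \<omega>, Y \<omega>, Z \<omega>)"
    let ?pxz = "?P (\<lambda>\<omega>. (X \<omega>, Z \<omega>)) (X \<omega>, Z \<omega>)"
    let ?pyz = "?P (\<lambda>\<omega>. (Y \<omega>, Z \<omega>)) (Y \<omega>, Z \<omega>)"
    let ?pz = "?P Z (Z \<omega>)"
    note fibers = fiber[of "\<lambda>\<omega>. (X \<omega>, Y \<omega>, Z \<omega>)"] fiber[of "\<lambda>\<omega>. (X \<omega>, Z \<omega>)"]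
      fiber[of "\<lambda>\<omega>. (Y \<omega>, Z \<omega>)"] fiber[of Z]
    have prod: "?p * ?pz = ?pxz * ?pyz"
      using indep[OF \<omega>] by (simp only: fibers prod.inject)
    have le: "?p \<le> ?pxz" "?p \<le> ?pyz" "?p \<le> ?pz"
      unfolding fibers prod.inject using sf by (auto intro!: finite_measure_mono event simple_function_Pair)
    show "?p * log b (?p / (?pxz * (?pyz / ?pz))) = 0"
    proof (cases "?p = 0")
      case False
      then have "?p > 0" by (simp add: less_le)
      with le have pos: "?pxz > 0" "?pyz > 0" "?pz > 0" by linarith+
      then have "?p / (?pxz * (?pyz / ?pz)) = (?p * ?pz) / (?pxz * ?pyz)"
        by simp
      also have "\<dots> = 1"
        using prod pos by simp
      finally show ?thesis by (simp only: log_one mult_zero_right)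
    qed simp
  qed
  finally show ?thesis .
qed

lemma card_eq_sum_card_fibers:
  assumes "finite T"
  shows "card {t\<in>T. P t} = (\<Sum>b\<in>Y ` T. card {t\<in>T. P t \<and> Y t = b})"
proof -
  have "card {t\<in>T. P t} = card (\<Union>b\<in>Y ` T. {t\<in>T. P t \<and> Y t = b})"
    by (rule arg_cong[where f=card]) auto
  also have "\<dots> = (\<Sum>b\<in>Y ` T. card {t\<in>T. P t \<and> Y t = b})"
    using assms by (intro card_UN_disjoint) auto
  finally show ?thesis .
qed

lemma card_proportional_coarsen:
  assumes fin: "finite \<Omega>"
    and Z_Y: "\<And>\<omega> \<omega>'. \<omega> \<in> \<Omega> \<Longrightarrow> \<omega>' \<in> \<Omega> \<Longrightarrow> Y \<omega> = Y \<omega>' \<Longrightarrow> Z \<omega> = Z \<omega>'"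
    and X_Y: "\<And>\<omega>. \<omega> \<in> \<Omega> \<Longrightarrow>
      real (card {\<omega>'\<in>\<Omega>. X \<omega>' = a \<and> Y \<omega>' = Y \<omega>}) = h (Z \<omega>) * real (card {\<omega>'\<in>\<Omega>. Y \<omega>' = Y \<omega>})"
    and \<omega>: "\<omega> \<in> \<Omega>"
  shows "real (card {\<omega>'\<in>\<Omega>. X \<omega>' = a \<and> Z \<omega>' = Z \<omega>}) = h (Z \<omega>) * real (card {\<omega>'\<in>\<Omega>. Z \<omega>' = Z \<omega>})"
proof -
  let ?T = "{\<omega>'\<in>\<Omega>. Z \<omega>' = Z \<omega>}"
  have fiber: "{t\<in>?T. P t \<and> Y t = Y \<omega>1} = {t\<in>\<Omega>. P t \<and> Y t = Y \<omega>1}" if "\<omega>1 \<in> ?T" for \<omega>1 P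
  proof -
    have "Z t = Z \<omega>" if "t \<in> \<Omega>" "Y t = Y \<omega>1" for t
      using Z_Y[OF that(1), of \<omega>1] that(2) \<open>\<omega>1 \<in> ?T\<close> by simp
    then show ?thesis by auto
  qed
  have "real (card {\<omega>'\<in>\<Omega>. X \<omega>' = a \<and> Z \<omega>' = Z \<omega>}) = real (card {t\<in>?T. X t = a})"
    by (rule arg_cong[where f="\<lambda>S. real (card S)"]) blast
  also have "\<dots> = (\<Sum>b\<in>Y ` ?T. real (card {t\<in>?T. X t = a \<and> Y t = b}))"
    unfolding of_nat_sum[symmetric] using fin by (intro arg_cong[where f=real] card_eq_sum_card_fibers) simp
  also have "\<dots> = (\<Sum>b\<in>Y ` ?T. h (Z \<omega>) * real (card {t\<in>?T. True \<and> Y t = b}))"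
  proof (rule sum.cong[OF refl])
    fix b assume "b \<in> Y ` ?T"
    then obtain \<omega>1 where \<omega>1: "\<omega>1 \<in> ?T" and b: "b = Y \<omega>1" by blast
    have "real (card {t\<in>?T. X t = a \<and> Y t = b}) = real (card {t\<in>\<Omega>. X t = a \<and> Y t = Y \<omega>1})"
      unfolding b fiber[OF \<omega>1] ..
    also have "\<dots> = h (Z \<omega>) * real (card {t\<in>\<Omega>. True \<and> Y t = Y \<omega>1})"
      using X_Y[of \<omega>1] \<omega>1 by simp
    also have "\<dots> = h (Z \<omega>) * real (card {t\<in>?T. True \<and> Y t = b})"
      unfolding b fiber[OF \<omega>1] ..
    finally show "real (card {t\<in>?T. X t = a \<and> Y t = b}) = h (Z \<omega>) * real (card {t\<in>?T. True \<and> Y t = b})" .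
  qed
  also have "\<dots> = h (Z \<omega>) * real (card {t\<in>?T. True})"
    unfolding sum_distrib_left[symmetric] of_nat_sum[symmetric] using fin
    by (intro arg_cong[where f="\<lambda>k. h (Z \<omega>) * real k"] card_eq_sum_card_fibers[symmetric]) simp
  finally show ?thesis by simp
qed

lemma conditional_mutual_information_uniform_eq_0:
  assumes fin: "finite \<Omega>" and ne: "\<Omega> \<noteq> {}"
    and Z_Y: "\<And>\<omega> \<omega>'. \<omega> \<in> \<Omega> \<Longrightarrow> \<omega>' \<in> \<Omega> \<Longrightarrow> Y \<omega> = Y \<omega>' \<Longrightarrow> Z \<omega> = Z \<omega>'"
    and X_Y: "\<And>a \<omega>. \<omega> \<in> \<Omega> \<Longrightarrow>
      real (card {\<omega>'\<in>\<Omega>. X \<omega>' = a \<and> Y \<omega>' = Y \<omega>}) = h a (Z \<omega>) * real (card {\<omega>'\<in>\<Omega>. Y \<omega>' = Y \<omega>})"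
  shows "prob_space.conditional_mutual_information (uniform_count_measure \<Omega>) 2
     (count_space (X ` \<Omega>)) (count_space (Y ` \<Omega>)) (count_space (Z ` \<Omega>)) X Y Z = 0"
proof -
  interpret information_space "uniform_count_measure \<Omega>" 2
    by (rule information_space.intro[OF prob_space_uniform_count_measure[OF fin ne]]) (unfold_locales, simp)
  have space: "space (uniform_count_measure \<Omega>) = \<Omega>"
    by (rule space_uniform_count_measure)
  have simple: "simple_function (uniform_count_measure \<Omega>) f" for f :: "_ \<Rightarrow> 'e"
    using fin by (auto simp: simple_function_def space sets_uniform_count_measure)
  have prob: "prob {\<omega>'\<in>\<Omega>. P \<omega>'} = card {\<omega>'\<in>\<Omega>. P \<omega>'} / card \<Omega>" for P
    using fin by (simp add: measure_uniform_count_measure)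
  have "prob {\<omega>'\<in>\<Omega>. X \<omega>' = X \<omega> \<and> Y \<omega>' = Y \<omega> \<and> Z \<omega>' = Z \<omega>} * prob {\<omega>'\<in>\<Omega>. Z \<omega>' = Z \<omega>}
    = prob {\<omega>'\<in>\<Omega>. X \<omega>' = X \<omega> \<and> Z \<omega>' = Z \<omega>} * prob {\<omega>'\<in>\<Omega>. Y \<omega>' = Y \<omega> \<and> Z \<omega>' = Z \<omega>}"
    if \<omega>: "\<omega> \<in> \<Omega>" for \<omega>
  proof -
    have Z_redundant: "{\<omega>'\<in>\<Omega>. X \<omega>' = X \<omega> \<and> Y \<omega>' = Y \<omega> \<and> Z \<omega>' = Z \<omega>} = {\<omega>'\<in>\<Omega>. X \<omega>' = X \<omega> \<and> Y \<omega>' = Y \<omega>}"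
      "{\<omega>'\<in>\<Omega>. Y \<omega>' = Y \<omega> \<and> Z \<omega>' = Z \<omega>} = {\<omega>'\<in>\<Omega>. Y \<omega>' = Y \<omega>}"
      using Z_Y[OF _ \<omega>] by auto
    have XZ: "real (card {\<omega>'\<in>\<Omega>. X \<omega>' = X \<omega> \<and> Z \<omega>' = Z \<omega>})
      = h (X \<omega>) (Z \<omega>) * real (card {\<omega>'\<in>\<Omega>. Z \<omega>' = Z \<omega>})"
      by (rule card_proportional_coarsen[OF fin Z_Y X_Y \<omega>])
    show ?thesis
      unfolding Z_redundant prob X_Y[OF \<omega>] XZ by (simp add: mult_ac)
  qed
  then show ?thesis
    using conditional_mutual_information_eq_0[OF simple simple simple, of X Y Z] by (simp add: space)
qed

lemma four_mult_mod_div: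
  fixes a N :: int
  shows "(4 * a) mod (4 * N) div 4 = a mod N"
  by (simp flip: mult_mod_right)

lemma sp_share_less: "i < n \<Longrightarrow> sp_share m n (y, v, w) i = w i"
  by (simp add: sp_share_def)

lemma sp_share_last: "sp_share m n (y, v, w) n = (v - (\<Sum>j\<in>{1..<n}. w j)) mod 2^m"
proof -
  have "(2::int)^(m+2) = 4 * 2^m" by simp
  moreover have "4 * v - 4 * (\<Sum>j\<in>{1..<n}. w j) = 4 * (v - (\<Sum>j\<in>{1..<n}. w j))"
    by (simp add: right_diff_distrib)
  ultimately show ?thesis
    by (simp only: sp_share_def prod.case less_irrefl if_False four_mult_mod_div)
qed

lemma message_mod_eq:
  fixes s x y N :: int
  shows "((4 * s - 2 * y - 1) mod (4 * N) + (2 * x + 1) * (2 * y + 1)) mod (4 * N)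
    = (4 * ((s + x * y) mod N) + 2 * x) mod (4 * N)"
proof -
  have "((4 * s - 2 * y - 1) mod (4 * N) + (2 * x + 1) * (2 * y + 1)) mod (4 * N)
      = (4 * (s + x * y) + 2 * x) mod (4 * N)"
    unfolding mod_add_left_eq by (rule arg_cong[where f="\<lambda>z. z mod (4 * N)"]) algebra
  also have "\<dots> = (4 * ((s + x * y) mod N) + 2 * x) mod (4 * N)"
    by (simp only: mult_mod_right mod_add_left_eq)
  finally show ?thesis .
qed

lemma sp_msgs_eq_masked_shares:
  "sp_msgs m n x (y, v, w)
    = (\<lambda>i\<in>{1..n}. (4 * ((sp_share m n (y, v, w) i + x i * y i) mod 2^m) + 2 * x i) mod 2^(m+2))"
proof -
  have "(2::int)^(m+2) = 4 * 2^m" by simp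
  then show ?thesis
    by (simp only: sp_msgs_def prod.case message_mod_eq)
qed

definition shift_mod :: "'i set \<Rightarrow> int \<Rightarrow> ('i \<Rightarrow> int) \<Rightarrow> ('i \<Rightarrow> int) \<Rightarrow> 'i \<Rightarrow> int" where
  "shift_mod I N c w = (\<lambda>i\<in>I. (w i + c i) mod N)"

lemma shift_mod_in_PiE: "0 < N \<Longrightarrow> shift_mod I N c w \<in> I \<rightarrow>\<^sub>E {0..<N}"
  by (simp add: shift_mod_def)

lemma shift_mod_uminus_cancel:
  assumes "w \<in> I \<rightarrow>\<^sub>E {0..<N}"
  shows "shift_mod I N (\<lambda>i. - c i) (shift_mod I N c w) = w"
proof (rule ext)
  fix i
  show "shift_mod I N (\<lambda>i. - c i) (shift_mod I N c w) i = w i"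
  proof (cases "i \<in> I")
    case True
    then have "w i mod N = w i"
      using PiE_mem[OF assms] by simp
    with True show ?thesis by (simp add: shift_mod_def mod_diff_left_eq)
  next
    case False
    then show ?thesis
      using PiE_arb[OF assms] by (simp add: shift_mod_def)
  qed
qed

lemma bij_betw_shift_mod:
  assumes "0 < N"
  shows "bij_betw (shift_mod I N c) (I \<rightarrow>\<^sub>E {0..<N}) (I \<rightarrow>\<^sub>E {0..<N})"
proof (rule bij_betw_byWitness[where f'="shift_mod I N (\<lambda>i. - c i)"])
  show "\<forall>w\<in>I \<rightarrow>\<^sub>E {0..<N}. shift_mod I N (\<lambda>i. - c i) (shift_mod I N c w) = w"
    by (intro ballI shift_mod_uminus_cancel)
  show "\<forall>w\<in>I \<rightarrow>\<^sub>E {0..<N}. shift_mod I N c (shift_mod I N (\<lambda>i. - c i) w) = w"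
    using shift_mod_uminus_cancel[where c="\<lambda>i. - c i"] unfolding minus_minus by blast
  show "shift_mod I N c ` (I \<rightarrow>\<^sub>E {0..<N}) \<subseteq> I \<rightarrow>\<^sub>E {0..<N}"
    "shift_mod I N (\<lambda>i. - c i) ` (I \<rightarrow>\<^sub>E {0..<N}) \<subseteq> I \<rightarrow>\<^sub>E {0..<N}"
    by (simp_all add: image_subset_iff shift_mod_in_PiE[OF assms])
qed

lemma card_shift_mod_preimage:
  assumes "0 < N"
  shows "card {w \<in> I \<rightarrow>\<^sub>E {0..<N}. P (shift_mod I N c w)} = card {w \<in> I \<rightarrow>\<^sub>E {0..<N}. P w}"
  using bij_betw_Collect[OF bij_betw_shift_mod[OF assms], where P="\<lambda>w. P (shift_mod I N c w)" and Q=P] by (rule bij_betw_same_card) simp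

lemma sum_shift_mod_mod:
  "(\<Sum>i\<in>I. shift_mod I N c w i) mod N = (\<Sum>i\<in>I. w i + c i) mod N"
proof -
  have "(\<Sum>i\<in>I. shift_mod I N c w i) = (\<Sum>i\<in>I. (w i + c i) mod N)"
    by (intro sum.cong) (simp_all add: shift_mod_def)
  then show ?thesis by (simp add: mod_sum_eq)
qed

lemma sp_masked_last_share_shift:
  assumes "1 \<le> n"
  shows "(sp_share m n (y, v, w) n + x n * y n) mod 2^m
    = sp_share m n (\<lambda>_. 0, sp_out m n x (y, v, w), shift_mod {1..<n} (2^m) (\<lambda>i. x i * y i) w) n mod 2^m"
proof -
  let ?S = "\<Sum>j\<in>{1..<n}. w j" and ?P = "\<Sum>j\<in>{1..<n}. x j * y j"
  let ?w' = "shift_mod {1..<n} (2^m) (\<lambda>i. x i * y i) w"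
  have split_last: "(\<Sum>i=1..n. x i * y i) = ?P + x n * y n"
    using assms by (simp add: sum.last_plus)
  have "(sp_share m n (y, v, w) n + x n * y n) mod 2^m = (v - ?S + x n * y n) mod 2^m"
    by (simp add: sp_share_last mod_add_left_eq)
  also have "\<dots> = (((\<Sum>i=1..n. x i * y i) + v) - (?S + ?P)) mod 2^m"
    unfolding split_last by (simp add: algebra_simps)
  also have "\<dots> = (sp_out m n x (y, v, w) - (\<Sum>j\<in>{1..<n}. ?w' j)) mod 2^m"
    by (rule mod_diff_cong) (simp_all add: sp_out_def sum_shift_mod_mod sum.distrib)
  also have "\<dots> = sp_share m n (\<lambda>_. 0, sp_out m n x (y, v, w), ?w') n mod 2^m"
    by (simp add: sp_share_last)
  finally show ?thesis .
qed

lemma sp_msgs_shift: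
  assumes "1 \<le> n"
  shows "sp_msgs m n x (y, v, w)
    = sp_msgs m n x (\<lambda>_. 0, sp_out m n x (y, v, w), shift_mod {1..<n} (2^m) (\<lambda>i. x i * y i) w)"
  unfolding sp_msgs_eq_masked_shares
proof (rule restrict_ext)
  fix i assume i: "i \<in> {1..n}"
  show "(4 * ((sp_share m n (y, v, w) i + x i * y i) mod 2^m) + 2 * x i) mod 2^(m+2)
    = (4 * ((sp_share m n (\<lambda>_. 0, sp_out m n x (y, v, w), shift_mod {1..<n} (2^m) (\<lambda>i. x i * y i) w) i
          + x i * 0) mod 2^m) + 2 * x i) mod 2^(m+2)"
  proof (cases "i < n")
    case True
    with i show ?thesis by (simp add: sp_share_less shift_mod_def)
  next
    case False
    with i have "i = n" by simp
    then show ?thesis using sp_masked_last_share_shift[OF assms] by simp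
  qed
qed

lemma sp_bob_fiber:
  assumes "(y, v, w0) \<in> sp_space m n"
  shows "{\<omega>\<in>sp_space m n. P \<omega> \<and> sp_bob \<omega> = (y, v)}
    = (\<lambda>w. (y, v, w)) ` {w \<in> {1..<n} \<rightarrow>\<^sub>E {0..<2^m}. P (y, v, w)}"
proof (intro set_eqI iffI)
  fix \<omega> assume "\<omega> \<in> {\<omega>\<in>sp_space m n. P \<omega> \<and> sp_bob \<omega> = (y, v)}"
  then show "\<omega> \<in> (\<lambda>w. (y, v, w)) ` {w \<in> {1..<n} \<rightarrow>\<^sub>E {0..<2^m}. P (y, v, w)}"
    by (cases \<omega>) (auto simp only: sp_space_def sp_bob_def mem_Collect_eq mem_Times_iff prod.case prod.inject fst_conv snd_conv)
next
  fix \<omega> assume "\<omega> \<in> (\<lambda>w. (y, v, w)) ` {w \<in> {1..<n} \<rightarrow>\<^sub>E {0..<2^m}. P (y, v, w)}"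
  with assms show "\<omega> \<in> {\<omega>\<in>sp_space m n. P \<omega> \<and> sp_bob \<omega> = (y, v)}"
    by (auto simp only: sp_space_def sp_bob_def mem_Collect_eq mem_Times_iff prod.case fst_conv snd_conv)
qed

lemma card_sp_bob_fiber:
  assumes "(y, v, w0) \<in> sp_space m n"
  shows "card {\<omega>\<in>sp_space m n. P \<omega> \<and> sp_bob \<omega> = (y, v)}
    = card {w \<in> {1..<n} \<rightarrow>\<^sub>E {0..<2^m}. P (y, v, w)}"
  unfolding sp_bob_fiber[OF assms] by (rule card_image) (simp add: inj_on_def)

lemma card_sp_msgs_bob_fiber:
  assumes "1 \<le> n" and "(y, v, w0) \<in> sp_space m n"
  shows "card {\<omega>\<in>sp_space m n. sp_msgs m n x \<omega> = a \<and> sp_bob \<omega> = (y, v)}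
    = card {w \<in> {1..<n} \<rightarrow>\<^sub>E {0..<2^m}. sp_msgs m n x (\<lambda>_. 0, sp_out m n x (y, v, w0), w) = a}"
proof -
  have shift: "sp_msgs m n x (y, v, w)
    = sp_msgs m n x (\<lambda>_. 0, sp_out m n x (y, v, w0), shift_mod {1..<n} (2^m) (\<lambda>i. x i * y i) w)" for w
  proof -
    have "sp_out m n x (y, v, w) = sp_out m n x (y, v, w0)"
      by (simp add: sp_out_def)
    with sp_msgs_shift[OF assms(1)] show ?thesis by metis
  qed
  have "card {\<omega>\<in>sp_space m n. sp_msgs m n x \<omega> = a \<and> sp_bob \<omega> = (y, v)}
    = card {w \<in> {1..<n} \<rightarrow>\<^sub>E {0..<2^m}.
        sp_msgs m n x (\<lambda>_. 0, sp_out m n x (y, v, w0), shift_mod {1..<n} (2^m) (\<lambda>i. x i * y i) w) = a}"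
    unfolding card_sp_bob_fiber[OF assms(2)] shift ..
  also have "\<dots> = card {w \<in> {1..<n} \<rightarrow>\<^sub>E {0..<2^m}. sp_msgs m n x (\<lambda>_. 0, sp_out m n x (y, v, w0), w) = a}"
    by (rule card_shift_mod_preimage) simp
  finally show ?thesis .
qed

theorem lemma4:
  fixes m n :: nat and x :: "nat \<Rightarrow> int"
  assumes "m \<ge> 1" and "n \<ge> 1"
    and "\<forall>i\<in>{1..n}. x i \<in> {0..<2^m}"
  shows "prob_space.conditional_mutual_information (uniform_count_measure (sp_space m n)) 2
           (count_space (sp_msgs m n x ` sp_space m n))
           (count_space (sp_bob ` sp_space m n))
           (count_space (sp_out m n x ` sp_space m n))
           (sp_msgs m n x) sp_bob (sp_out m n x) = 0"
proof (rule conditional_mutual_information_uniform_eq_0)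
  let ?W = "{1..<n} \<rightarrow>\<^sub>E {0..<2^m::int}"
  show "finite (sp_space m n)"
    by (simp add: sp_space_def finite_PiE)
  have "((\<lambda>_\<in>{1..n}. 0), 0, (\<lambda>_\<in>{1..<n}. 0)) \<in> sp_space m n"
    by (simp add: sp_space_def)
  then show "sp_space m n \<noteq> {}" by blast
  show "sp_out m n x \<omega> = sp_out m n x \<omega>'" if "sp_bob \<omega> = sp_bob \<omega>'" for \<omega> \<omega>'
    using that by (cases \<omega>; cases \<omega>') (simp add: sp_bob_def sp_out_def)
  have "card ?W > 0"
    by (simp add: card_gt_0_iff finite_PiE PiE_eq_empty_iff)
  fix a \<omega> assume "\<omega> \<in> sp_space m n"
  moreover obtain y v w0 where "\<omega> = (y, v, w0)" by (cases \<omega>)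
  ultimately show "real (card {\<omega>'\<in>sp_space m n. sp_msgs m n x \<omega>' = a \<and> sp_bob \<omega>' = sp_bob \<omega>})
    = real (card {w\<in>?W. sp_msgs m n x (\<lambda>_. 0, sp_out m n x \<omega>, w) = a}) / real (card ?W)
      * real (card {\<omega>'\<in>sp_space m n. sp_bob \<omega>' = sp_bob \<omega>})"
    using \<open>card ?W > 0\<close> card_sp_msgs_bob_fiber[OF assms(2)] card_sp_bob_fiber[where P="\<lambda>_. True"]
    by (simp add: sp_bob_def)
qed

end
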